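(* Let $F:\mathcal{P}(V,A)\to 2^A\setminus\{\emptyset\}$ be a committee selection rule satisfying SPO and SPP. Let $P$ be a profile, $i$ a voter, $W=F(P)$, $s=\mathrm{best}(P_i,W)$, $b=\mathrm{worst}(P_i,W)$, and let $W'=F(P^{i\uparrow s})$. Then (1) $\mathrm{best}(P_i^{\uparrow s},W')=s$, and (2) $\mathrm{worst}(P_i^{\uparrow s},W')=b$.
   Context: $V$ is a finite nonempty set of voters, $A$ a finite set of alternatives; a profile $P$ assigns to each voter $i$ a linear order $P_i$ on $A$ (strict part $\succ_i$, weak part $\succeq_i$); $P_i'P_{-i}$ replaces voter $i$'s order by $P_i'$. A committee selection rule maps each profile to a nonempty subset of $A$. $\mathrm{best}(P_i,W)$, $\mathrm{worst}(P_i,W)$ are the $P_i$-best and $P_i$-worst elements of nonempty $W\subseteq A$. SPO: for all $P$, $i$, $P_i'$, $\mathrm{best}(P_i,F(P))\succeq_i\mathrm{best}(P_i,F(P_i'P_{-i}))$; SPP: same with $\mathrm{worst}$. $P_i^{\uparrow s}$ is the linear order obtained from $P_i$ by swapping $s$ with the alternative directly above it (no change if $s$ is already ranked first), and $P^{i\uparrow s}$ is the profile obtained from $P$ by replacing $P_i$ with $P_i^{\uparrow s}$. *)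

theory Defs
  imports Main
begin

text \<open>A linear order on the finite set A is represented as a ranking list:
  a duplicate-free list enumerating A, first element = most preferred.\<close>

definition ranking :: "'a set \<Rightarrow> 'a list \<Rightarrow> bool" where
  "ranking A r \<longleftrightarrow> distinct r \<and> set r = A"

definition weak_pref :: "'a list \<Rightarrow> 'a \<Rightarrow> 'a \<Rightarrow> bool" where
  "weak_pref r x y \<longleftrightarrow> (\<exists>j k. j \<le> k \<and> k < length r \<and> r ! j = x \<and> r ! k = y)"

definition best :: "'a list \<Rightarrow> 'a set \<Rightarrow> 'a" where
  "best r W = (THE x. x \<in> W \<and> (\<forall>y\<in>W. weak_pref r x y))"

definition worst :: "'a list \<Rightarrow> 'a set \<Rightarrow> 'a" where
  "worst r W = (THE x. x \<in> W \<and> (\<forall>y\<in>W. weak_pref r y x))"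

definition is_profile :: "'v set \<Rightarrow> 'a set \<Rightarrow> ('v \<Rightarrow> 'a list) \<Rightarrow> bool" where
  "is_profile V A P \<longleftrightarrow> (\<forall>i\<in>V. ranking A (P i))"

definition committee_rule ::
  "'v set \<Rightarrow> 'a set \<Rightarrow> (('v \<Rightarrow> 'a list) \<Rightarrow> 'a set) \<Rightarrow> bool" where
  "committee_rule V A F \<longleftrightarrow> (\<forall>P. is_profile V A P \<longrightarrow> F P \<noteq> {} \<and> F P \<subseteq> A)"

definition SPO :: "'v set \<Rightarrow> 'a set \<Rightarrow> (('v \<Rightarrow> 'a list) \<Rightarrow> 'a set) \<Rightarrow> bool" where
  "SPO V A F \<longleftrightarrow> (\<forall>P i r. is_profile V A P \<longrightarrow> i \<in> V \<longrightarrow> ranking A r \<longrightarrow>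
      weak_pref (P i) (best (P i) (F P)) (best (P i) (F (P(i := r)))))"

definition SPP :: "'v set \<Rightarrow> 'a set \<Rightarrow> (('v \<Rightarrow> 'a list) \<Rightarrow> 'a set) \<Rightarrow> bool" where
  "SPP V A F \<longleftrightarrow> (\<forall>P i r. is_profile V A P \<longrightarrow> i \<in> V \<longrightarrow> ranking A r \<longrightarrow>
      weak_pref (P i) (worst (P i) (F P)) (worst (P i) (F (P(i := r)))))"

definition up :: "'a list \<Rightarrow> 'a \<Rightarrow> 'a list" where
  "up r s = (let k = (LEAST k. k < length r \<and> r ! k = s) in
      if s \<notin> set r \<or> k = 0 then r else r[k - 1 := s, k := r ! (k - 1)])"

end

theory Submission
  imports Defs
begin

text \<open>Let s be the best member of the committee for voter i at position k > 0, and let a be the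
  alternative directly above it. Applying SPO to the deviation from P_i to P_i^{up s} shows that
  every member of the new committee W' is weakly below s in P_i; so neither W nor W' contains a,
  and on both committees the orders P_i and P_i^{up s} coincide. Applying SPO and SPP once more to
  the deviation back from P_i^{up s} to P_i gives the reverse inequalities, and antisymmetry
  identifies best and worst of W' with s and b.\<close>

definition position :: "'a list \<Rightarrow> 'a \<Rightarrow> nat" where
  "position r x = (LEAST k. k < length r \<and> r ! k = x)"

lemma position_nth:
  assumes "distinct r" "k < length r"
  shows "position r (r ! k) = k"
  unfolding position_def
  by (rule Least_equality) (use assms in \<open>auto simp: nth_eq_iff_index_eq\<close>)

lemma nth_position:
  assumes "x \<in> set r"
  shows "position r x < length r \<and> r ! position r x = x"
proof -
  obtain k where "k < length r" "r ! k = x" using assms by (auto simp: in_set_conv_nth)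
  then show ?thesis unfolding position_def by (metis (mono_tags, lifting) LeastI)
qed

lemma position_inj:
  assumes "x \<in> set r" "y \<in> set r" "position r x = position r y"
  shows "x = y"
  using nth_position[OF assms(1)] nth_position[OF assms(2)] assms(3) by metis

lemma weak_pref_iff_position:
  assumes "distinct r"
  shows "weak_pref r x y \<longleftrightarrow> x \<in> set r \<and> y \<in> set r \<and> position r x \<le> position r y"
proof
  assume "weak_pref r x y"
  then obtain j k where "j \<le> k" "k < length r" "r ! j = x" "r ! k = y"
    by (auto simp: weak_pref_def)
  then show "x \<in> set r \<and> y \<in> set r \<and> position r x \<le> position r y"
    using position_nth[OF assms, of j] position_nth[OF assms, of k] by auto
next
  assume "x \<in> set r \<and> y \<in> set r \<and> position r x \<le> position r y"
  then show "weak_pref r x y"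
    using nth_position[of x r] nth_position[of y r] unfolding weak_pref_def by blast
qed

lemma weak_pref_antisym:
  assumes "distinct r" "weak_pref r x y" "weak_pref r y x"
  shows "x = y"
  using assms position_inj[of x r y] by (auto simp: weak_pref_iff_position)

lemma weak_pref_trans:
  assumes "distinct r" "weak_pref r x y" "weak_pref r y z"
  shows "weak_pref r x z"
  using assms by (auto simp: weak_pref_iff_position)

lemma weak_pref_rev: "weak_pref (rev r) x y \<longleftrightarrow> weak_pref r y x"
proof -
  have "weak_pref r y x" if pref: "weak_pref (rev r) x y" for r :: "'a list" and x y
  proof -
    obtain j k where jk: "j \<le> k" "k < length r" "rev r ! j = x" "rev r ! k = y"
      using pref unfolding weak_pref_def length_rev by blast
    then have "r ! (length r - Suc k) = y" "r ! (length r - Suc j) = x"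
      by (simp_all add: rev_nth)
    moreover have "length r - Suc k \<le> length r - Suc j" "length r - Suc j < length r"
      using jk(1,2) by linarith+
    ultimately show ?thesis unfolding weak_pref_def by blast
  qed
  from this[of r] this[of "rev r"] show ?thesis by auto
qed

lemma worst_eq_best_rev: "worst r W = best (rev r) W"
  by (simp add: worst_def best_def weak_pref_rev)

lemma best_cong:
  assumes "\<And>x y. x \<in> U \<Longrightarrow> y \<in> U \<Longrightarrow> weak_pref r' x y \<longleftrightarrow> weak_pref r x y"
  shows "best r' U = best r U"
  unfolding best_def by (metis assms)

lemma worst_cong:
  assumes "\<And>x y. x \<in> U \<Longrightarrow> y \<in> U \<Longrightarrow> weak_pref r' x y \<longleftrightarrow> weak_pref r x y"
  shows "worst r' U = worst r U"
  unfolding worst_eq_best_rev by (rule best_cong) (simp add: weak_pref_rev assms)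

lemma best_in_and_pref:
  assumes "distinct r" "W \<subseteq> set r" "W \<noteq> {}"
  shows "best r W \<in> W \<and> (\<forall>y\<in>W. weak_pref r (best r W) y)"
proof -
  have "finite W" using assms(2) finite_subset by blast
  then have "Min (position r ` W) \<in> position r ` W" using assms(3) by (intro Min_in) auto
  then obtain x where x: "x \<in> W" "position r x = Min (position r ` W)" by auto
  with \<open>finite W\<close> assms(2) have "\<forall>y\<in>W. weak_pref r x y"
    by (auto simp: weak_pref_iff_position[OF assms(1)])
  with x(1) have "\<exists>!x. x \<in> W \<and> (\<forall>y\<in>W. weak_pref r x y)"
    using weak_pref_antisym[OF assms(1)] by blast
  then show ?thesis unfolding best_def by (rule theI')
qed

lemma worst_in_and_pref:
  assumes "distinct r" "W \<subseteq> set r" "W \<noteq> {}"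
  shows "worst r W \<in> W \<and> (\<forall>y\<in>W. weak_pref r y (worst r W))"
  using best_in_and_pref[of "rev r" W] assms by (simp add: worst_eq_best_rev weak_pref_rev)

lemma up_eq_self: "position r s = 0 \<Longrightarrow> up r s = r"
  by (simp add: up_def position_def Let_def)

lemma up_swap:
  assumes "distinct r" "s \<in> set r" "position r s = k" "0 < k"
  shows "distinct (up r s) \<and> set (up r s) = set r \<and>
    (\<forall>x\<in>set r. position (up r s) x =
       (if position r x = k then k - 1 else if position r x = k - 1 then k else position r x))"
proof -
  have k: "k < length r" "r ! k = s" using nth_position[OF assms(2)] assms(3) by auto
  define r' where "r' = r[k - 1 := s, k := r ! (k - 1)]"
  have up: "up r s = r'" using assms unfolding up_def r'_def position_def Let_def by auto
  have len: "length r' = length r" by (simp add: r'_def)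
  define sw where "sw j = (if j = k then k - 1 else if j = k - 1 then k else j)" for j
  have nth: "r' ! j = r ! sw j" if "j < length r" for j
    using that k assms(4) by (auto simp: r'_def sw_def nth_list_update)
  have sw_less: "sw j < length r" if "j < length r" for j using that k by (auto simp: sw_def)
  have sw_inj: "i = j" if "sw i = sw j" for i j
    using that assms(4) by (auto simp: sw_def split: if_splits)
  have dist: "distinct r'"
    unfolding distinct_conv_nth len
    using nth sw_less sw_inj assms(1) by (metis nth_eq_iff_index_eq)
  have set: "set r' = set r" unfolding r'_def using k assms(4)
    by (metis set_swap less_imp_diff_less)
  have "position r' x = sw (position r x)" if x: "x \<in> set r" for x
  proof -
    have p: "position r x < length r" "r ! position r x = x" using nth_position[OF x] by auto
    have "sw (sw (position r x)) = position r x" by (auto simp: sw_def)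
    then have "r' ! sw (position r x) = x" using nth[OF sw_less[OF p(1)]] p by simp
    then show ?thesis using position_nth[OF dist, of "sw (position r x)"] sw_less[OF p(1)] len by simp
  qed
  then show ?thesis using dist set up by (simp add: sw_def)
qed

lemma ranking_up: "ranking A r \<Longrightarrow> ranking A (up r s)"
  using up_swap[of r s "position r s"] up_eq_self[of r s]
  by (cases "s \<in> set r \<and> position r s \<noteq> 0") (auto simp: ranking_def up_def)

text \<open>Only the alternative directly above s changes its relative position, and it lies strictly
  above every alternative that s weakly precedes.\<close>

lemma weak_pref_up_iff:
  assumes "distinct r" "weak_pref r s x" "weak_pref r s y"
  shows "weak_pref (up r s) x y \<longleftrightarrow> weak_pref r x y"
proof (cases "position r s = 0")
  case True
  then show ?thesis by (simp add: up_eq_self)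
next
  case False
  define k where "k = position r s"
  have s: "s \<in> set r" using assms(2) by (simp add: weak_pref_iff_position[OF assms(1)])
  note swap = up_swap[OF assms(1) s k_def[symmetric]]
  have "k \<le> position r x" "k \<le> position r y" "x \<in> set r" "y \<in> set r"
    using assms by (auto simp: weak_pref_iff_position k_def)
  moreover from this have
    "position (up r s) x = (if position r x = k then k - 1 else position r x)"
    "position (up r s) y = (if position r y = k then k - 1 else position r y)"
    using swap False k_def by auto
  ultimately show ?thesis
    using swap False k_def assms(1) by (simp add: weak_pref_iff_position) linarith
qed

lemma best_up:
  assumes "distinct r" "\<forall>x\<in>U. weak_pref r s x"
  shows "best (up r s) U = best r U"
  using assms by (intro best_cong) (simp add: weak_pref_up_iff)

lemma worst_up:
  assumes "distinct r" "\<forall>x\<in>U. weak_pref r s x"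
  shows "worst (up r s) U = worst r U"
  using assms by (intro worst_cong) (simp add: weak_pref_up_iff)

lemma weak_pref_up_antisym:
  assumes "distinct r" "weak_pref r s x" "weak_pref r s y"
    and "weak_pref r x y" "weak_pref (up r s) y x"
  shows "x = y"
  using assms weak_pref_antisym[OF assms(1,4)] by (simp add: weak_pref_up_iff)

lemma SPO_committee_below_best:
  assumes "committee_rule V A F" "SPO V A F" "is_profile V A P" "i \<in> V" "ranking A r'"
  shows "\<forall>x\<in>F (P(i := r')). weak_pref (P i) (best (P i) (F P)) x"
proof -
  have r: "distinct (P i)" "set (P i) = A"
    using assms(3,4) by (auto simp: is_profile_def ranking_def)
  have "is_profile V A (P(i := r'))" using assms(3,5) by (simp add: is_profile_def)
  then have "F (P(i := r')) \<subseteq> set (P i)" "F (P(i := r')) \<noteq> {}"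
    using assms(1) r(2) by (auto simp: committee_rule_def)
  note best' = best_in_and_pref[OF r(1) this]
  have "weak_pref (P i) (best (P i) (F P)) (best (P i) (F (P(i := r'))))"
    using assms(2)[unfolded SPO_def, rule_format, OF assms(3,4,5)] .
  with best' show ?thesis using weak_pref_trans[OF r(1)] by blast
qed

theorem lemma8:
  fixes V :: "'v set" and A :: "'a set" and F :: "('v \<Rightarrow> 'a list) \<Rightarrow> 'a set"
    and P :: "'v \<Rightarrow> 'a list" and i :: 'v
  assumes "finite V" and "V \<noteq> {}" and "finite A"
    and "committee_rule V A F"
    and "SPO V A F" and "SPP V A F"
    and "is_profile V A P" and "i \<in> V"
  shows "let W = F P; s = best (P i) W; b = worst (P i) W;
             W' = F (P(i := up (P i) s))
         in best (up (P i) s) W' = s \<and> worst (up (P i) s) W' = b"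
proof -
  define r W s b where "r = P i" and "W = F P" and "s = best r W" and "b = worst r W"
  define r' W' where "r' = up r s" and "W' = F (P(i := r'))"
  have r: "ranking A r" using assms(7,8) by (simp add: is_profile_def r_def)
  then have r': "ranking A r'" and dist: "distinct r"
    using ranking_up[OF r] by (simp_all add: r'_def ranking_def)
  have profile': "is_profile V A (P(i := r'))" "P(i := r) = P"
    using assms(7) r' by (simp_all add: is_profile_def r_def)
  have "W \<subseteq> set r" "W \<noteq> {}" "W' \<subseteq> set r" "W' \<noteq> {}"
    using assms(4,7) profile'(1) r by (auto simp: committee_rule_def ranking_def W_def W'_def)
  note W = best_in_and_pref[OF dist this(1,2), folded s_def]
    worst_in_and_pref[OF dist this(1,2), folded b_def]
    and W' = best_in_and_pref[OF dist this(3,4)] worst_in_and_pref[OF dist this(3,4)]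
  have "\<forall>x\<in>W'. weak_pref r s x"
    using SPO_committee_below_best[OF assms(4,5,7,8) r'] unfolding r_def W_def s_def W'_def .
  with W have below: "\<forall>x\<in>W. weak_pref r s x" "\<forall>x\<in>W'. weak_pref r s x" by blast+
  have forward: "weak_pref r b (worst r W')"
    using assms(6)[unfolded SPP_def, rule_format, OF assms(7,8) r']
    unfolding r_def W_def b_def W'_def .
  have "weak_pref r' (best r' W') (best r' W)" "weak_pref r' (worst r' W') (worst r' W)"
    using assms(5,6)[unfolded SPO_def SPP_def, rule_format, OF profile'(1) assms(8) r]
    unfolding fun_upd_same fun_upd_upd profile'(2) W_def W'_def .
  then have "weak_pref r' (best r W') s" "weak_pref r' (worst r W') b"
    using best_up[OF dist] worst_up[OF dist] below by (simp_all add: r'_def s_def b_def)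
  then have "best r W' = s" "worst r W' = b"
    using forward weak_pref_up_antisym[OF dist, of s] below W W' unfolding r'_def by blast+
  then show ?thesis
    using best_up[OF dist below(2)] worst_up[OF dist below(2)]
    unfolding Let_def r_def W_def s_def b_def r'_def W'_def by simp
qed

end
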